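(* Let $\{\mathcal Z_n\}$ be a Galton–Watson process with countably many types and irreducible mean progeny matrix $M$ satisfying the dichotomy property. Suppose there exist a probability vector $\boldsymbol\alpha_1$ with all entries strictly positive and $\lambda_1<1$ such that $\boldsymbol\alpha_1M\le\lambda_1\boldsymbol\alpha_1$, and a probability vector $\boldsymbol\alpha_2$ and $\lambda_2>1$ such that $\boldsymbol\alpha_2M\ge\lambda_2\boldsymbol\alpha_2$. Then $\boldsymbol q=\boldsymbol 1$; if $\varphi_0$ has distribution $\boldsymbol\alpha_1$ then $\mathbb E[|\mathcal Z_n|]\le\lambda_1^n$ for all $n$, so $\mathbb E[|\mathcal Z_n|]\to0$; and if $\varphi_0$ has distribution $\boldsymbol\alpha_2$ then $\mathbb E[|\mathcal Z_n|]\to\infty$ while the population still becomes extinct with probability 1.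
   Context: A (multitype) Galton–Watson process with type set $\mathcal S=\{1,2,3,\dots\}$ is $\{\mathcal Z_n=(Z_{n1},Z_{n2},\dots)\}_{n\in\mathbb N}$, $Z_{n\ell}$ the number of type-$\ell$ individuals in generation $n$, started from one individual of (possibly random) type $\varphi_0$; $|\mathcal Z_n|=\sum_\ell Z_{n\ell}$. The mean progeny matrix is $M_{ij}=\partial P_i/\partial s_j|_{\boldsymbol s=\boldsymbol 1}$ (assumed finite). Global extinction: $q_i=\mathbb P[\lim_n|\mathcal Z_n|=0\mid\varphi_0=i]$. The dichotomy property holds if for every initial type $i$, with probability 1 either $|\mathcal Z_n|=0$ eventually or $|\mathcal Z_n|\to\infty$. Vector inequalities are componentwise. *)

theory Defs
  imports "HOL-Probability.Probability"
begin

text \<open>Types are indexed by nat (the type set S = {1,2,3,...} relabelled as {0,1,2,...}).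
  A population state is a vector z :: nat => nat, z j = number of type-j individuals.
  The offspring law of a type-i individual is p i, a pmf on offspring vectors.\<close>

type_synonym popstate = "nat \<Rightarrow> nat"

definition unitvec :: "nat \<Rightarrow> popstate" where
  "unitvec i = (\<lambda>j. if j = i then 1 else 0)"

definition popsize :: "popstate \<Rightarrow> nat" where
  "popsize z = (\<Sum>j\<in>{j. z j \<noteq> 0}. z j)"

fun offspring_conv :: "(nat \<Rightarrow> popstate pmf) \<Rightarrow> nat list \<Rightarrow> popstate pmf" where
  "offspring_conv p [] = return_pmf (\<lambda>_. 0)"
| "offspring_conv p (t # ts) =
     map_pmf (\<lambda>(a, b). (\<lambda>j. a j + b j)) (pair_pmf (p t) (offspring_conv p ts))"

definition individuals :: "popstate \<Rightarrow> nat list" where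
  "individuals z = concat (map (\<lambda>j. replicate (z j) j) (sorted_list_of_set {j. z j \<noteq> 0}))"

definition gw_kernel :: "(nat \<Rightarrow> popstate pmf) \<Rightarrow> popstate \<Rightarrow> popstate pmf" where
  "gw_kernel p z = offspring_conv p (individuals z)"

text \<open>(Omega, Z) is a multitype Galton--Watson process with offspring laws p started from
  one individual whose type phi_0 has distribution mu: Z n are random population vectors
  forming a Markov chain with initial law of unitvec phi_0 and kernel gw_kernel p,
  characterised by its finite-dimensional distributions.\<close>
definition gw_process ::
  "(nat \<Rightarrow> popstate pmf) \<Rightarrow> nat pmf \<Rightarrow> 'w measure \<Rightarrow> (nat \<Rightarrow> 'w \<Rightarrow> popstate) \<Rightarrow> bool" where
  "gw_process p \<mu> \<Omega> Z \<longleftrightarrow>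
     prob_space \<Omega> \<and>
     (\<forall>n. Z n \<in> measurable \<Omega> (count_space UNIV)) \<and>
     (\<forall>xs. xs \<noteq> [] \<longrightarrow>
        measure \<Omega> {\<omega> \<in> space \<Omega>. \<forall>k < length xs. Z k \<omega> = xs ! k}
        = pmf (map_pmf unitvec \<mu>) (hd xs) *
          (\<Prod>k < length xs - 1. pmf (gw_kernel p (xs ! k)) (xs ! Suc k)))"

definition mean_matrix :: "(nat \<Rightarrow> popstate pmf) \<Rightarrow> nat \<Rightarrow> nat \<Rightarrow> ennreal" where
  "mean_matrix p i j = (\<integral>\<^sup>+ r. of_nat (r j) \<partial>measure_pmf (p i))"

fun mean_matrix_pow :: "(nat \<Rightarrow> popstate pmf) \<Rightarrow> nat \<Rightarrow> nat \<Rightarrow> nat \<Rightarrow> ennreal" where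
  "mean_matrix_pow p 0 i j = (if i = j then 1 else 0)"
| "mean_matrix_pow p (Suc n) i j = (\<Sum>k. mean_matrix_pow p n i k * mean_matrix p k j)"

definition irreducible_mean :: "(nat \<Rightarrow> popstate pmf) \<Rightarrow> bool" where
  "irreducible_mean p \<longleftrightarrow> (\<forall>i j. \<exists>n. mean_matrix_pow p n i j > 0)"

definition extinction_event :: "'w measure \<Rightarrow> (nat \<Rightarrow> 'w \<Rightarrow> popstate) \<Rightarrow> 'w set" where
  "extinction_event \<Omega> Z = {\<omega> \<in> space \<Omega>. \<exists>n. popsize (Z n \<omega>) = 0}"

definition dichotomy :: "(nat \<Rightarrow> popstate pmf) \<Rightarrow> 'w itself \<Rightarrow> bool" where
  "dichotomy p _ \<longleftrightarrow> (\<forall>i (\<Omega> :: 'w measure) Z. gw_process p (return_pmf i) \<Omega> Z \<longrightarrow>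
     (AE \<omega> in \<Omega>. (\<exists>n. popsize (Z n \<omega>) = 0) \<or>
                  filterlim (\<lambda>n. popsize (Z n \<omega>)) at_top sequentially))"

definition expected_size :: "'w measure \<Rightarrow> (nat \<Rightarrow> 'w \<Rightarrow> popstate) \<Rightarrow> nat \<Rightarrow> ennreal" where
  "expected_size \<Omega> Z n = (\<integral>\<^sup>+ \<omega>. of_nat (popsize (Z n \<omega>)) \<partial>\<Omega>)"

end

theory Submission
  imports Defs
begin

(*
  Proof idea.  Everything follows from first-moment (mean) computations.

  1. The law of Z_n is computed explicitly: gen_law p mu n is the n-fold
     iteration of the Galton--Watson kernel started from unitvec phi_0.  Via the
     law of the path (Z_0,...,Z_n) we show that in every gw_process the variable
     Z_n has law gen_law p mu n, and that this law is the mixture over the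
     initial type of the laws started from a fixed type.
  2. The mean numbers m_n(j) of type-j individuals satisfy m_{n+1} = m_n M, and
     E|Z_n| = sum_j m_n(j).  Hence a sub-invariant vector (v M <= lam v) gives
     m_n <= c lam^n v and a super-invariant vector gives m_n >= lam^n v.
  3. For alpha_1 with positive entries and lam_1 < 1 this yields, for every
     initial type i, E|Z_n| <= lam_1^n / alpha_1(i); by Markov's inequality the
     probability of survival up to time n tends to 0, so extinction is almost
     sure from every type and, by dominated convergence, from any random type.
  4. With phi_0 ~ alpha_1 resp. alpha_2 the same bounds give E|Z_n| <= lam_1^n
     resp. E|Z_n| >= lam_2^n, whence the limits 0 and infinity.
*)

section \<open>The law of the n-th generation\<close>

fun gen_law :: "(nat \<Rightarrow> popstate pmf) \<Rightarrow> nat pmf \<Rightarrow> nat \<Rightarrow> popstate pmf" where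
  "gen_law p \<mu> 0 = map_pmf unitvec \<mu>"
| "gen_law p \<mu> (Suc n) = bind_pmf (gen_law p \<mu> n) (gw_kernel p)"

lemma gen_law_mixture: "gen_law p \<mu> n = bind_pmf \<mu> (\<lambda>i. gen_law p (return_pmf i) n)"
proof (induction n)
  case 0 then show ?case by (simp add: map_pmf_def bind_return_pmf)
next
  case (Suc n) then show ?case by (simp add: bind_assoc_pmf)
qed

(* Every offspring vector has finitely many nonzero entries.  Then so has every
   reachable population, which makes popsize and the sums over types well behaved. *)
definition finite_offspring :: "(nat \<Rightarrow> popstate pmf) \<Rightarrow> bool" where
  "finite_offspring p \<longleftrightarrow> (\<forall>i r. r \<in> set_pmf (p i) \<longrightarrow> finite {j. r j \<noteq> 0})"

lemma offspring_conv_finite_support: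
  assumes "finite_offspring p"
    and "z \<in> set_pmf (offspring_conv p ts)"
  shows "finite {j. z j \<noteq> 0}"
  using assms(2)
proof (induction ts arbitrary: z)
  case (Cons t ts)
  then obtain a b where ab: "a \<in> set_pmf (p t)" "b \<in> set_pmf (offspring_conv p ts)"
    and z: "z = (\<lambda>j. a j + b j)"
    by auto
  have "{j. z j \<noteq> 0} \<subseteq> {j. a j \<noteq> 0} \<union> {j. b j \<noteq> 0}" using z by auto
  moreover have "finite {j. a j \<noteq> 0}" using assms(1) ab(1) by (simp add: finite_offspring_def)
  ultimately show ?case using Cons.IH[OF ab(2)] finite_subset by blast
qed simp

lemma gen_law_finite_support:
  assumes "finite_offspring p"
    and "z \<in> set_pmf (gen_law p \<mu> n)"
  shows "finite {j. z j \<noteq> 0}"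
  using assms(2)
proof (induction n arbitrary: z)
  case (Suc n)
  then show ?case
    using offspring_conv_finite_support[OF assms(1)] by (auto simp: gw_kernel_def)
qed (auto simp: unitvec_def)

section \<open>Every Galton--Watson process has the generation laws gen_law\<close>

fun path_law :: "(nat \<Rightarrow> popstate pmf) \<Rightarrow> nat pmf \<Rightarrow> nat \<Rightarrow> popstate list pmf" where
  "path_law p \<mu> 0 = map_pmf (\<lambda>i. [unitvec i]) \<mu>"
| "path_law p \<mu> (Suc n) =
     bind_pmf (path_law p \<mu> n) (\<lambda>xs. map_pmf (\<lambda>y. xs @ [y]) (gw_kernel p (last xs)))"

lemma path_law_last: "map_pmf last (path_law p \<mu> n) = gen_law p \<mu> n"
proof (induction n)
  case (Suc n)
  have "map_pmf last (path_law p \<mu> (Suc n)) = bind_pmf (path_law p \<mu> n) (\<lambda>xs. gw_kernel p (last xs))"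
    by (simp add: map_bind_pmf map_pmf_comp)
  also have "\<dots> = bind_pmf (map_pmf last (path_law p \<mu> n)) (gw_kernel p)"
    by (simp add: bind_map_pmf)
  finally show ?case using Suc by simp
qed (simp add: map_pmf_comp)

lemma path_law_length: "xs \<in> set_pmf (path_law p \<mu> n) \<Longrightarrow> length xs = Suc n"
  by (induction n arbitrary: xs) auto

(* The probability weight that the definition of gw_process assigns to a path. *)
definition path_weight :: "(nat \<Rightarrow> popstate pmf) \<Rightarrow> nat pmf \<Rightarrow> popstate list \<Rightarrow> real" where
  "path_weight p \<mu> xs = pmf (map_pmf unitvec \<mu>) (hd xs) *
     (\<Prod>k < length xs - 1. pmf (gw_kernel p (xs ! k)) (xs ! Suc k))"

lemma path_weight_snoc:
  assumes "ys \<noteq> []"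
  shows "path_weight p \<mu> (ys @ [y]) = path_weight p \<mu> ys * pmf (gw_kernel p (last ys)) y"
proof -
  obtain m where m: "length ys = Suc m" using assms by (cases ys) auto
  have "(\<Prod>k < m. pmf (gw_kernel p ((ys @ [y]) ! k)) ((ys @ [y]) ! Suc k)) =
        (\<Prod>k < m. pmf (gw_kernel p (ys ! k)) (ys ! Suc k))"
    using m by (intro prod.cong) (simp_all add: nth_append)
  moreover have "hd (ys @ [y]) = hd ys" "last ys = ys ! m" using assms m by (auto simp: last_conv_nth)
  ultimately show ?thesis using m by (simp add: path_weight_def nth_append mult_ac)
qed

lemma pmf_map_snoc:
  "pmf (map_pmf (\<lambda>y. a @ [y]) K) ys = (if ys \<noteq> [] \<and> a = butlast ys then pmf K (last ys) else 0)"
proof (cases "ys \<noteq> [] \<and> a = butlast ys")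
  case True
  then have "ys = a @ [last ys]" by simp
  moreover have "pmf (map_pmf (\<lambda>y. a @ [y]) K) (a @ [last ys]) = pmf K (last ys)"
    by (rule pmf_map_inj') (auto simp: inj_def)
  ultimately show ?thesis using True by metis
next
  case False
  then have "ys \<notin> (\<lambda>y. a @ [y]) ` set_pmf K" by auto
  then have "pmf (map_pmf (\<lambda>y. a @ [y]) K) ys = 0" by (simp add: pmf_map_outside)
  then show ?thesis using False by (simp only: if_False)
qed

lemma pmf_path_law_Suc:
  "pmf (path_law p \<mu> (Suc n)) ys = (if ys \<noteq> [] then
     pmf (path_law p \<mu> n) (butlast ys) * pmf (gw_kernel p (last (butlast ys))) (last ys) else 0)"
proof -
  let ?k = "if ys \<noteq> [] then ennreal (pmf (gw_kernel p (last (butlast ys))) (last ys)) else 0"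
  have "ennreal (pmf (path_law p \<mu> (Suc n)) ys) =
      (\<integral>\<^sup>+a. (if ys \<noteq> [] \<and> a = butlast ys then ennreal (pmf (gw_kernel p (last a)) (last ys)) else 0)
        \<partial>path_law p \<mu> n)"
    by (simp add: ennreal_pmf_bind pmf_map_snoc if_distrib cong: if_cong)
  also have "\<dots> = (\<integral>\<^sup>+a. indicator {butlast ys} a * ?k \<partial>path_law p \<mu> n)"
    by (rule nn_integral_cong) (auto simp: indicator_def)
  also have "\<dots> = ennreal (pmf (path_law p \<mu> n) (butlast ys)) * ?k"
    by (simp add: nn_integral_multc emeasure_pmf_single)
  also have "\<dots> = ennreal (if ys \<noteq> [] then
      pmf (path_law p \<mu> n) (butlast ys) * pmf (gw_kernel p (last (butlast ys))) (last ys) else 0)"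
    by (simp add: ennreal_mult)
  finally show ?thesis by (simp add: ennreal_inj)
qed

lemma pmf_path_law:
  "pmf (path_law p \<mu> n) xs = (if length xs = Suc n then path_weight p \<mu> xs else 0)"
proof (induction n arbitrary: xs)
  case 0
  have law: "path_law p \<mu> 0 = map_pmf (\<lambda>x. [x]) (map_pmf unitvec \<mu>)" by (simp add: map_pmf_comp)
  show ?case
  proof (cases "length xs = 1")
    case True
    then obtain x where x: "xs = [x]" by (cases xs) auto
    have "pmf (map_pmf (\<lambda>x. [x]) (map_pmf unitvec \<mu>)) [x] = pmf (map_pmf unitvec \<mu>) x"
      by (rule pmf_map_inj') (auto simp: inj_def)
    then show ?thesis using x law by (simp add: path_weight_def)
  next
    case False
    then have "xs \<notin> (\<lambda>x. [x]) ` set_pmf (map_pmf unitvec \<mu>)" by auto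
    then show ?thesis using False law by (simp add: pmf_map_outside)
  qed
next
  case (Suc n)
  show ?case
  proof (cases "length xs = Suc (Suc n)")
    case False
    then show ?thesis by (subst pmf_path_law_Suc) (auto simp: Suc)
  next
    case True
    then have xs: "xs = butlast xs @ [last xs]" "butlast xs \<noteq> []"
      by (auto simp flip: length_greater_0_conv)
    have "pmf (path_law p \<mu> (Suc n)) xs =
        path_weight p \<mu> (butlast xs) * pmf (gw_kernel p (last (butlast xs))) (last xs)"
      using True by (subst pmf_path_law_Suc) (auto simp: Suc)
    also have "\<dots> = path_weight p \<mu> xs"
      using path_weight_snoc[OF xs(2)] xs(1) by metis
    finally show ?thesis using True by simp
  qed
qed

lemma gw_process_sets:
  assumes gw: "gw_process p \<mu> \<Omega> Z"
  shows "{\<omega>\<in>space \<Omega>. Z n \<omega> \<in> B} \<in> sets \<Omega>"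
proof -
  have "Z n -` B \<inter> space \<Omega> \<in> sets \<Omega>"
    using gw by (intro measurable_sets[of _ _ "count_space UNIV"]) (simp_all add: gw_process_def)
  moreover have "Z n -` B \<inter> space \<Omega> = {\<omega>\<in>space \<Omega>. Z n \<omega> \<in> B}" by auto
  ultimately show ?thesis by simp
qed

definition path_event :: "'w measure \<Rightarrow> (nat \<Rightarrow> 'w \<Rightarrow> popstate) \<Rightarrow> popstate list \<Rightarrow> 'w set" where
  "path_event \<Omega> Z xs = {\<omega>\<in>space \<Omega>. \<forall>k<length xs. Z k \<omega> = xs ! k}"

lemma gw_process_path_event:
  assumes gw: "gw_process p \<mu> \<Omega> Z" and len: "length xs = Suc n"
  shows "emeasure \<Omega> (path_event \<Omega> Z xs) = pmf (path_law p \<mu> n) xs"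
proof -
  interpret prob_space \<Omega> using gw by (simp add: gw_process_def)
  have "xs \<noteq> []" using len by auto
  then have "measure \<Omega> (path_event \<Omega> Z xs) = path_weight p \<mu> xs"
    using gw unfolding gw_process_def path_event_def path_weight_def by blast
  then show ?thesis using len by (simp add: emeasure_eq_measure pmf_path_law)
qed

lemma path_event_disjoint:
  assumes "length xs = length ys" "xs \<noteq> ys"
  shows "path_event \<Omega> Z xs \<inter> path_event \<Omega> Z ys = {}"
proof -
  have "\<exists>k<length xs. xs ! k \<noteq> ys ! k" using assms by (auto simp: list_eq_iff_nth_eq)
  then show ?thesis using assms(1) unfolding path_event_def by auto
qed

(* Decomposing {Z_n in A} according to the path shows P(Z_n in A) >= gen_law(A). *)
lemma gw_process_gen_law_le:
  assumes gw: "gw_process p \<mu> \<Omega> Z"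
  shows "emeasure (gen_law p \<mu> n) A \<le> emeasure \<Omega> {\<omega>\<in>space \<Omega>. Z n \<omega> \<in> A}"
proof -
  have [measurable]: "\<And>k. Z k \<in> measurable \<Omega> (count_space UNIV)" using gw by (simp add: gw_process_def)
  let ?E = "path_event \<Omega> Z"
  define I where "I = {xs \<in> set_pmf (path_law p \<mu> n). last xs \<in> A}"
  have I_countable: "countable I" unfolding I_def by (rule countable_subset[OF _ countable_set_pmf]) auto
  have len: "xs \<in> I \<Longrightarrow> length xs = Suc n" for xs unfolding I_def using path_law_length by blast
  have E_sets: "?E xs \<in> sets \<Omega>" for xs unfolding path_event_def by measurable
  have disj: "disjoint_family_on ?E I"
    unfolding disjoint_family_on_def using len path_event_disjoint by metis
  have E_sub: "(\<Union>(?E ` I)) \<subseteq> {\<omega>\<in>space \<Omega>. Z n \<omega> \<in> A}"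
  proof
    fix \<omega> assume "\<omega> \<in> \<Union>(?E ` I)"
    then obtain xs where xs: "xs \<in> I" "\<omega> \<in> ?E xs" by auto
    have "xs \<noteq> []" using len[OF xs(1)] by auto
    then have "last xs = xs ! n" using len[OF xs(1)] by (simp add: last_conv_nth)
    then show "\<omega> \<in> {\<omega>\<in>space \<Omega>. Z n \<omega> \<in> A}"
      using xs len[OF xs(1)] by (auto simp: path_event_def I_def)
  qed
  have "emeasure (gen_law p \<mu> n) A = emeasure (path_law p \<mu> n) (last -` A)"
    by (simp flip: path_law_last)
  also have "\<dots> = emeasure (path_law p \<mu> n) I"
    unfolding I_def by (subst emeasure_Int_set_pmf[symmetric]) (auto intro!: arg_cong[where f="emeasure _"])
  also have "\<dots> = (\<integral>\<^sup>+ xs. pmf (path_law p \<mu> n) xs \<partial>count_space I)"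
    by (rule nn_integral_pmf[symmetric])
  also have "\<dots> = (\<integral>\<^sup>+ xs. emeasure \<Omega> (?E xs) \<partial>count_space I)"
    by (rule nn_integral_cong) (simp add: gw_process_path_event[OF gw] len)
  also have "\<dots> = emeasure \<Omega> (\<Union>(?E ` I))"
    by (rule emeasure_UN_countable[symmetric]) (use E_sets I_countable disj in auto)
  also have "\<dots> \<le> emeasure \<Omega> {\<omega>\<in>space \<Omega>. Z n \<omega> \<in> A}"
    by (rule emeasure_mono[OF E_sub gw_process_sets[OF gw]])
  finally show ?thesis .
qed

(* Applying the inequality to A and to its complement gives equality of laws. *)
lemma gw_process_distr:
  assumes gw: "gw_process p \<mu> \<Omega> Z"
  shows "distr \<Omega> (count_space UNIV) (Z n) = measure_pmf (gen_law p \<mu> n)"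
proof (rule measure_eqI)
  interpret prob_space \<Omega> using gw by (simp add: gw_process_def)
  let ?P = "\<lambda>B. measure \<Omega> {\<omega>\<in>space \<Omega>. Z n \<omega> \<in> B}"
  have le: "measure_pmf.prob (gen_law p \<mu> n) B \<le> ?P B" for B
    using gw_process_gen_law_le[OF gw, of n B]
    by (simp add: emeasure_eq_measure measure_pmf.emeasure_eq_measure)
  have total_\<Omega>: "?P B + ?P (-B) = 1" for B
  proof -
    have "?P B + ?P (-B) = measure \<Omega> ({\<omega>\<in>space \<Omega>. Z n \<omega> \<in> B} \<union> {\<omega>\<in>space \<Omega>. Z n \<omega> \<in> -B})"
      using gw_process_sets[OF gw, of n B] gw_process_sets[OF gw, of n "-B"]
      by (intro finite_measure_Union[symmetric]) auto
    also have "{\<omega>\<in>space \<Omega>. Z n \<omega> \<in> B} \<union> {\<omega>\<in>space \<Omega>. Z n \<omega> \<in> -B} = space \<Omega>" by auto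
    finally show ?thesis by (simp add: prob_space)
  qed
  have total_law: "measure_pmf.prob (gen_law p \<mu> n) B + measure_pmf.prob (gen_law p \<mu> n) (-B) = 1" for B
    using measure_pmf.prob_compl[of B "gen_law p \<mu> n"] by (simp add: Compl_eq_Diff_UNIV)
  have eq: "?P B = measure_pmf.prob (gen_law p \<mu> n) B" for B
    using le[of B] le[of "-B"] total_\<Omega>[of B] total_law[of B] by linarith
  fix B
  have "Z n \<in> measurable \<Omega> (count_space UNIV)" using gw by (simp add: gw_process_def)
  then have "emeasure (distr \<Omega> (count_space UNIV) (Z n)) B = emeasure \<Omega> (Z n -` B \<inter> space \<Omega>)"
    by (simp add: emeasure_distr)
  also have "Z n -` B \<inter> space \<Omega> = {\<omega>\<in>space \<Omega>. Z n \<omega> \<in> B}" by auto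
  finally show "emeasure (distr \<Omega> (count_space UNIV) (Z n)) B = emeasure (gen_law p \<mu> n) B"
    by (simp add: emeasure_eq_measure measure_pmf.emeasure_eq_measure eq)
qed simp

lemma gw_process_nn_integral:
  assumes gw: "gw_process p \<mu> \<Omega> Z"
  shows "(\<integral>\<^sup>+ \<omega>. f (Z n \<omega>) \<partial>\<Omega>) = (\<integral>\<^sup>+ z. f z \<partial>gen_law p \<mu> n)"
proof -
  have "Z n \<in> measurable \<Omega> (count_space UNIV)" using gw by (simp add: gw_process_def)
  then show ?thesis by (simp add: gw_process_distr[OF gw, symmetric] nn_integral_distr)
qed

lemma expected_size_gen_law:
  assumes gw: "gw_process p \<mu> \<Omega> Z"
  shows "expected_size \<Omega> Z n = (\<integral>\<^sup>+ z. of_nat (popsize z) \<partial>gen_law p \<mu> n)"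
  unfolding expected_size_def by (rule gw_process_nn_integral[OF gw, where f="\<lambda>z. of_nat (popsize z)"])

lemma gw_process_measure:
  assumes gw: "gw_process p \<mu> \<Omega> Z"
  shows "measure \<Omega> {\<omega>\<in>space \<Omega>. Z n \<omega> \<in> B} = measure_pmf.prob (gen_law p \<mu> n) B"
proof -
  have "Z n \<in> measurable \<Omega> (count_space UNIV)" using gw by (simp add: gw_process_def)
  then have "measure_pmf.prob (gen_law p \<mu> n) B = measure \<Omega> (Z n -` B \<inter> space \<Omega>)"
    by (simp add: gw_process_distr[OF gw, symmetric] measure_distr)
  also have "Z n -` B \<inter> space \<Omega> = {\<omega>\<in>space \<Omega>. Z n \<omega> \<in> B}" by auto
  finally show ?thesis ..
qed

section \<open>First moments\<close>

lemma nn_integral_offspring_conv: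
  "(\<integral>\<^sup>+ y. of_nat (y j) \<partial>offspring_conv p ts) = (\<Sum>t\<leftarrow>ts. mean_matrix p t j)"
proof (induction ts)
  case (Cons t ts)
  have "(\<integral>\<^sup>+ y. of_nat (y j) \<partial>offspring_conv p (t # ts))
     = (\<integral>\<^sup>+a. \<integral>\<^sup>+b. of_nat (a j) + of_nat (b j) \<partial>offspring_conv p ts \<partial>p t)"
    by (simp add: nn_integral_pair_pmf' case_prod_beta)
  also have "\<dots> = mean_matrix p t j + (\<integral>\<^sup>+b. of_nat (b j) \<partial>offspring_conv p ts)"
    by (simp add: nn_integral_add measure_pmf.emeasure_space_1 mean_matrix_def)
  finally show ?case using Cons by simp
qed simp

lemma sum_list_individuals:
  assumes "finite {j. z j \<noteq> 0}"
  shows "(\<Sum>t\<leftarrow>individuals z. (f t :: ennreal)) = (\<Sum>k. of_nat (z k) * f k)"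
proof -
  let ?S = "{j. z j \<noteq> 0}"
  have concat: "(\<Sum>t\<leftarrow>concat xss. f t) = (\<Sum>xs\<leftarrow>xss. \<Sum>t\<leftarrow>xs. f t)" for xss
    by (induction xss) auto
  have "(\<Sum>t\<leftarrow>individuals z. f t) = (\<Sum>k\<in>?S. of_nat (z k) * f k)"
    using assms unfolding individuals_def
    by (simp add: concat comp_def sum_list_replicate sum_list_distinct_conv_sum_set)
  also have "\<dots> = (\<Sum>k. of_nat (z k) * f k)"
    by (rule suminf_finite[symmetric]) (use assms in auto)
  finally show ?thesis .
qed

lemma popsize_eq_suminf:
  assumes "finite {j. z j \<noteq> 0}"
  shows "(of_nat (popsize z) :: ennreal) = (\<Sum>k. of_nat (z k))"
proof -
  have "(of_nat (popsize z) :: ennreal) = (\<Sum>k\<in>{j. z j \<noteq> 0}. of_nat (z k))"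
    by (simp add: popsize_def)
  also have "\<dots> = (\<Sum>k. of_nat (z k))"
    by (rule suminf_finite[symmetric]) (use assms in auto)
  finally show ?thesis .
qed

definition mean_count :: "(nat \<Rightarrow> popstate pmf) \<Rightarrow> nat pmf \<Rightarrow> nat \<Rightarrow> nat \<Rightarrow> ennreal" where
  "mean_count p \<mu> n j = (\<integral>\<^sup>+ z. of_nat (z j) \<partial>gen_law p \<mu> n)"

lemma mean_count_0: "mean_count p \<mu> 0 j = ennreal (pmf \<mu> j)"
proof -
  have "mean_count p \<mu> 0 j = (\<integral>\<^sup>+ i. indicator {j} i \<partial>\<mu>)"
    unfolding mean_count_def by (auto intro!: nn_integral_cong simp: unitvec_def indicator_def)
  then show ?thesis by (simp add: emeasure_pmf_single)
qed

lemma mean_count_Suc: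
  assumes fin: "finite_offspring p"
  shows "mean_count p \<mu> (Suc n) j = (\<Sum>k. mean_count p \<mu> n k * mean_matrix p k j)"
proof -
  have "mean_count p \<mu> (Suc n) j = (\<integral>\<^sup>+ z. (\<integral>\<^sup>+ y. of_nat (y j) \<partial>gw_kernel p z) \<partial>gen_law p \<mu> n)"
    by (simp add: mean_count_def)
  also have "\<dots> = (\<integral>\<^sup>+ z. (\<Sum>k. of_nat (z k) * mean_matrix p k j) \<partial>gen_law p \<mu> n)"
    using gen_law_finite_support[OF fin]
    by (intro nn_integral_cong_AE)
       (auto simp: AE_measure_pmf_iff gw_kernel_def nn_integral_offspring_conv sum_list_individuals)
  also have "\<dots> = (\<Sum>k. mean_count p \<mu> n k * mean_matrix p k j)"
    by (simp add: nn_integral_suminf mean_count_def nn_integral_multc)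
  finally show ?thesis .
qed

lemma expected_popsize_eq:
  assumes fin: "finite_offspring p"
  shows "(\<integral>\<^sup>+ z. of_nat (popsize z) \<partial>gen_law p \<mu> n) = (\<Sum>j. mean_count p \<mu> n j)"
proof -
  have "(\<integral>\<^sup>+ z. of_nat (popsize z) \<partial>gen_law p \<mu> n) = (\<integral>\<^sup>+ z. (\<Sum>j. of_nat (z j)) \<partial>gen_law p \<mu> n)"
    using gen_law_finite_support[OF fin]
    by (intro nn_integral_cong_AE) (auto simp: AE_measure_pmf_iff popsize_eq_suminf)
  then show ?thesis by (simp add: nn_integral_suminf mean_count_def)
qed

lemma mean_count_le_subinvariant:
  assumes fin: "finite_offspring p"
    and sub: "\<And>j. (\<Sum>k. v k * mean_matrix p k j) \<le> lam * v j"
    and init: "\<And>j. mean_count p \<mu> 0 j \<le> c * v j"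
  shows "mean_count p \<mu> n j \<le> c * lam ^ n * v j"
proof (induction n arbitrary: j)
  case (Suc n)
  have "mean_count p \<mu> (Suc n) j = (\<Sum>k. mean_count p \<mu> n k * mean_matrix p k j)"
    by (rule mean_count_Suc[OF fin])
  also have "\<dots> \<le> (\<Sum>k. (c * lam ^ n) * (v k * mean_matrix p k j))"
    by (rule suminf_le) (auto intro!: mult_right_mono Suc simp: mult.assoc[symmetric])
  also have "\<dots> = (c * lam ^ n) * (\<Sum>k. v k * mean_matrix p k j)"
    by simp
  also have "\<dots> \<le> c * lam ^ Suc n * v j"
    using mult_left_mono[OF sub[of j], of "c * lam ^ n"] by (simp add: mult_ac)
  finally show ?case .
qed (simp add: init)

lemma mean_count_ge_superinvariant:
  assumes fin: "finite_offspring p"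
    and super: "\<And>j. lam * v j \<le> (\<Sum>k. v k * mean_matrix p k j)"
    and init: "\<And>j. v j \<le> mean_count p \<mu> 0 j"
  shows "lam ^ n * v j \<le> mean_count p \<mu> n j"
proof (induction n arbitrary: j)
  case (Suc n)
  have "lam ^ Suc n * v j \<le> lam ^ n * (\<Sum>k. v k * mean_matrix p k j)"
    using mult_left_mono[OF super[of j], of "lam ^ n"] by (simp add: mult_ac)
  also have "\<dots> = (\<Sum>k. lam ^ n * v k * mean_matrix p k j)"
    by (simp add: mult.assoc)
  also have "\<dots> \<le> (\<Sum>k. mean_count p \<mu> n k * mean_matrix p k j)"
    by (rule suminf_le) (auto intro!: mult_right_mono Suc)
  also have "\<dots> = mean_count p \<mu> (Suc n) j" by (rule mean_count_Suc[OF fin, symmetric])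
  finally show ?case .
qed (simp add: init)

lemma suminf_pmf_ennreal: "(\<Sum>j. ennreal (pmf (\<alpha>::nat pmf) j)) = 1"
proof -
  have "(\<Sum>j. ennreal (pmf \<alpha> j)) = emeasure (measure_pmf \<alpha>) UNIV"
    by (simp add: nn_integral_count_space_nat[symmetric] nn_integral_pmf)
  then show ?thesis by (simp add: measure_pmf.emeasure_space_1)
qed

lemma expected_popsize_le:
  assumes fin: "finite_offspring p"
    and sub: "\<And>j. (\<Sum>k. ennreal (pmf \<alpha> k) * mean_matrix p k j) \<le> lam * ennreal (pmf \<alpha> j)"
    and init: "\<And>j. mean_count p \<mu> 0 j \<le> c * ennreal (pmf \<alpha> j)"
  shows "(\<integral>\<^sup>+ z. of_nat (popsize z) \<partial>gen_law p \<mu> n) \<le> c * lam ^ n"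
proof -
  have "(\<integral>\<^sup>+ z. of_nat (popsize z) \<partial>gen_law p \<mu> n) = (\<Sum>j. mean_count p \<mu> n j)"
    by (rule expected_popsize_eq[OF fin])
  also have "\<dots> \<le> (\<Sum>j. (c * lam ^ n) * ennreal (pmf \<alpha> j))"
    by (rule suminf_le) (auto intro: mean_count_le_subinvariant[OF fin sub init])
  also have "\<dots> = c * lam ^ n" by (simp add: suminf_pmf_ennreal)
  finally show ?thesis .
qed

lemma expected_popsize_ge:
  assumes fin: "finite_offspring p"
    and super: "\<And>j. lam * ennreal (pmf \<alpha> j) \<le> (\<Sum>k. ennreal (pmf \<alpha> k) * mean_matrix p k j)"
  shows "lam ^ n \<le> (\<integral>\<^sup>+ z. of_nat (popsize z) \<partial>gen_law p \<alpha> n)"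
proof -
  have "lam ^ n = (\<Sum>j. lam ^ n * ennreal (pmf \<alpha> j))"
    by (simp add: suminf_pmf_ennreal)
  also have "\<dots> \<le> (\<Sum>j. mean_count p \<alpha> n j)"
    by (rule suminf_le) (auto intro: mean_count_ge_superinvariant[OF fin super] simp: mean_count_0)
  also have "\<dots> = (\<integral>\<^sup>+ z. of_nat (popsize z) \<partial>gen_law p \<alpha> n)"
    by (rule expected_popsize_eq[OF fin, symmetric])
  finally show ?thesis .
qed

section \<open>Extinction\<close>

lemma survival_le_expected_popsize:
  "emeasure (measure_pmf M) {z. popsize z \<noteq> 0} \<le> (\<integral>\<^sup>+ z. of_nat (popsize z) \<partial>M)"
proof -
  have "emeasure (measure_pmf M) {z. popsize z \<noteq> 0} = (\<integral>\<^sup>+ z. indicator {z. popsize z \<noteq> 0} z \<partial>M)"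
    by simp
  also have "\<dots> \<le> (\<integral>\<^sup>+ z. of_nat (popsize z) \<partial>M)"
    by (rule nn_integral_mono) (auto simp: indicator_def)
  finally show ?thesis .
qed

(* Extinction by time n is contained in the extinction event, so a vanishing
   survival probability forces almost sure extinction. *)
lemma extinction_if_survival_vanishes:
  assumes gw: "gw_process p \<mu> \<Omega> Z"
    and lim: "(\<lambda>n. measure_pmf.prob (gen_law p \<mu> n) {z. popsize z \<noteq> 0}) \<longlonglongrightarrow> 0"
  shows "measure \<Omega> (extinction_event \<Omega> Z) = 1"
proof -
  interpret prob_space \<Omega> using gw by (simp add: gw_process_def)
  let ?S = "{z. popsize z \<noteq> 0}"
  have ext_eq: "extinction_event \<Omega> Z = (\<Union>n. {\<omega>\<in>space \<Omega>. Z n \<omega> \<in> - ?S})"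
    by (auto simp: extinction_event_def)
  have ext_sets: "extinction_event \<Omega> Z \<in> sets \<Omega>"
    unfolding ext_eq by (rule sets.countable_UN) (use gw_process_sets[OF gw] in blast)
  have ge: "1 - measure_pmf.prob (gen_law p \<mu> n) ?S \<le> measure \<Omega> (extinction_event \<Omega> Z)" for n
  proof -
    have "1 - measure_pmf.prob (gen_law p \<mu> n) ?S = measure_pmf.prob (gen_law p \<mu> n) (- ?S)"
      using measure_pmf.prob_compl[of ?S "gen_law p \<mu> n"] by (simp add: Compl_eq_Diff_UNIV)
    also have "\<dots> = measure \<Omega> {\<omega>\<in>space \<Omega>. Z n \<omega> \<in> - ?S}" by (rule gw_process_measure[OF gw, symmetric])
    also have "\<dots> \<le> measure \<Omega> (extinction_event \<Omega> Z)"
      by (rule finite_measure_mono[OF _ ext_sets]) (auto simp: ext_eq)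
    finally show ?thesis .
  qed
  have "(\<lambda>n. 1 - measure_pmf.prob (gen_law p \<mu> n) ?S) \<longlonglongrightarrow> 1 - 0"
    by (intro tendsto_intros lim)
  then have "1 \<le> measure \<Omega> (extinction_event \<Omega> Z)"
    using ge by (intro LIMSEQ_le_const2) auto
  then show ?thesis using prob_le_1 by (intro antisym) auto
qed

(* If survival probabilities vanish from every fixed initial type, they vanish
   from any random initial type (dominated convergence over the type). *)
lemma survival_vanishes_mixture:
  assumes lim: "\<And>i. (\<lambda>n. measure_pmf.prob (gen_law p (return_pmf i) n) S) \<longlonglongrightarrow> 0"
  shows "(\<lambda>n. measure_pmf.prob (gen_law p \<mu> n) S) \<longlonglongrightarrow> 0"
proof -
  define u where "u n i = measure_pmf.prob (gen_law p (return_pmf i) n) S" for n i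
  have mix: "ennreal (measure_pmf.prob (gen_law p \<mu> n) S) = (\<integral>\<^sup>+i. norm (0 - u n i) \<partial>\<mu>)" for n
  proof -
    have "ennreal (measure_pmf.prob (gen_law p \<mu> n) S) = (\<integral>\<^sup>+ z. indicator S z \<partial>gen_law p \<mu> n)"
      by (simp add: measure_pmf.emeasure_eq_measure)
    also have "\<dots> = (\<integral>\<^sup>+ i. (\<integral>\<^sup>+ z. indicator S z \<partial>gen_law p (return_pmf i) n) \<partial>\<mu>)"
      by (subst gen_law_mixture) simp
    finally show ?thesis by (simp add: u_def measure_pmf.emeasure_eq_measure)
  qed
  have "(\<lambda>n. \<integral>\<^sup>+i. norm ((\<lambda>_. 0::real) i - u n i) \<partial>\<mu>) \<longlonglongrightarrow> 0"
    by (rule nn_integral_dominated_convergence_norm[where w="\<lambda>_. 1"])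
       (simp_all add: u_def lim)
  then have "(\<lambda>n. ennreal (measure_pmf.prob (gen_law p \<mu> n) S)) \<longlonglongrightarrow> ennreal 0"
    by (simp add: mix)
  then show ?thesis by (simp add: ennreal_tendsto_0_iff)
qed

lemma survival_vanishes_from_type:
  assumes fin: "finite_offspring p"
    and pos: "pmf \<alpha> i > 0"
    and sub: "\<And>j. (\<Sum>k. ennreal (pmf \<alpha> k) * mean_matrix p k j) \<le> ennreal lam * ennreal (pmf \<alpha> j)"
    and lam: "0 \<le> lam" "lam < 1"
  shows "(\<lambda>n. measure_pmf.prob (gen_law p (return_pmf i) n) {z. popsize z \<noteq> 0}) \<longlonglongrightarrow> 0"
proof (rule tendsto_sandwich[of "\<lambda>_. 0" _ _ "\<lambda>n. lam ^ n / pmf \<alpha> i"])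
  have init: "mean_count p (return_pmf i) 0 j \<le> ennreal (1 / pmf \<alpha> i) * ennreal (pmf \<alpha> j)" for j
    using pos by (cases "j = i") (simp_all add: mean_count_0 ennreal_mult[symmetric])
  have "ennreal (measure_pmf.prob (gen_law p (return_pmf i) n) {z. popsize z \<noteq> 0})
      \<le> ennreal (1 / pmf \<alpha> i) * ennreal lam ^ n" for n
    using survival_le_expected_popsize expected_popsize_le[OF fin sub init]
    by (simp add: measure_pmf.emeasure_eq_measure[symmetric]) (meson order_trans)
  then show "\<forall>\<^sub>F n in sequentially. measure_pmf.prob (gen_law p (return_pmf i) n) {z. popsize z \<noteq> 0}
      \<le> lam ^ n / pmf \<alpha> i"
    using pos lam by (simp add: ennreal_power ennreal_mult[symmetric] ennreal_le_iff)
  show "(\<lambda>n. lam ^ n / pmf \<alpha> i) \<longlonglongrightarrow> 0"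
    using lam by (intro tendsto_divide_zero LIMSEQ_power_zero) auto
qed auto

lemma subinvariant_ennreal:
  assumes fin_mean: "\<And>i j. mean_matrix p i j < \<infinity>"
    and pos: "\<And>i. pmf \<alpha> i > 0"
    and sub: "\<And>j. summable (\<lambda>i. pmf \<alpha> i * enn2real (mean_matrix p i j)) \<and>
                (\<Sum>i. pmf \<alpha> i * enn2real (mean_matrix p i j)) \<le> lam * pmf \<alpha> j"
  shows "0 \<le> lam"
    and "(\<Sum>k. ennreal (pmf \<alpha> k) * mean_matrix p k j) \<le> ennreal lam * ennreal (pmf \<alpha> j)"
proof -
  have "0 \<le> (\<Sum>i. pmf \<alpha> i * enn2real (mean_matrix p i 0))"
    using sub[of 0] by (intro suminf_nonneg) auto
  then have "0 \<le> lam * pmf \<alpha> 0" using sub[of 0] by linarith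
  then show lam: "0 \<le> lam" using pos[of 0] by (simp add: zero_le_mult_iff)
  have "(\<Sum>k. ennreal (pmf \<alpha> k) * mean_matrix p k j) = (\<Sum>k. ennreal (pmf \<alpha> k * enn2real (mean_matrix p k j)))"
    using fin_mean by (intro suminf_cong) (simp add: ennreal_mult ennreal_enn2real less_top)
  also have "\<dots> = ennreal (\<Sum>k. pmf \<alpha> k * enn2real (mean_matrix p k j))"
    by (rule suminf_ennreal2) (use sub in auto)
  also have "\<dots> \<le> ennreal (lam * pmf \<alpha> j)"
    using sub by (intro ennreal_leI) auto
  finally show "(\<Sum>k. ennreal (pmf \<alpha> k) * mean_matrix p k j) \<le> ennreal lam * ennreal (pmf \<alpha> j)"
    using lam by (simp add: ennreal_mult)
qed

lemma tendsto_zero_geometric_upper: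
  fixes f :: "nat \<Rightarrow> ennreal"
  assumes lam: "0 \<le> lam" "lam < 1" and upper: "\<And>n. f n \<le> ennreal (lam ^ n)"
  shows "f \<longlonglongrightarrow> 0"
proof (rule tendsto_sandwich[of "\<lambda>_. 0" f sequentially "\<lambda>n. ennreal (lam ^ n)"])
  show "(\<lambda>n. ennreal (lam ^ n)) \<longlonglongrightarrow> 0"
    using lam by (simp add: ennreal_tendsto_0_iff LIMSEQ_power_zero)
qed (simp_all add: upper)

lemma tendsto_infinity_geometric_lower:
  fixes f :: "nat \<Rightarrow> ennreal"
  assumes lam: "1 < lam" and lower: "\<And>n. ennreal (lam ^ n) \<le> f n"
  shows "f \<longlonglongrightarrow> \<infinity>"
proof -
  have "LIM n sequentially. lam ^ n :> at_top"
    using filterlim_realpow_sequentially_gt1[of lam] lam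
    by (auto intro: filterlim_at_infinity_imp_filterlim_at_top simp: eventually_sequentially)
  then have "(\<lambda>n. ennreal (lam ^ n)) \<longlonglongrightarrow> \<infinity>"
    by (simp add: ennreal_tendsto_top_eq_at_top)
  show ?thesis
  proof (rule increasing_tendsto)
    fix x :: ennreal assume "x < \<infinity>"
    from order_tendstoD(1)[OF \<open>(\<lambda>n. ennreal (lam ^ n)) \<longlonglongrightarrow> \<infinity>\<close> this]
    show "\<forall>\<^sub>F n in sequentially. x < f n"
      by (rule eventually_mono) (erule less_le_trans[OF _ lower])
  qed simp
qed

theorem mainTheorem9:
  fixes p :: "nat \<Rightarrow> popstate pmf" and \<alpha>1 \<alpha>2 :: "nat pmf" and lam1 lam2 :: real
  assumes fin_offspring: "\<And>i r. r \<in> set_pmf (p i) \<Longrightarrow> finite {j. r j \<noteq> 0}"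
    and fin_mean: "\<And>i j. mean_matrix p i j < \<infinity>"
    and irred: "irreducible_mean p"
    and dich: "dichotomy p TYPE('w)"
    and \<alpha>1_pos: "\<And>i. pmf \<alpha>1 i > 0"
    and lam1: "lam1 < 1"
    and \<alpha>1M: "\<And>j. summable (\<lambda>i. pmf \<alpha>1 i * enn2real (mean_matrix p i j)) \<and>
                  (\<Sum>i. pmf \<alpha>1 i * enn2real (mean_matrix p i j)) \<le> lam1 * pmf \<alpha>1 j"
    and lam2: "lam2 > 1"
    and \<alpha>2M: "\<And>j. (\<Sum>i. ennreal (pmf \<alpha>2 i) * mean_matrix p i j) \<ge> ennreal (lam2 * pmf \<alpha>2 j)"
  shows "(\<forall>i (\<Omega> :: 'w measure) Z. gw_process p (return_pmf i) \<Omega> Z \<longrightarrow>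
            measure \<Omega> (extinction_event \<Omega> Z) = 1)
       \<and> (\<forall>(\<Omega> :: 'w measure) Z. gw_process p \<alpha>1 \<Omega> Z \<longrightarrow>
            (\<forall>n. expected_size \<Omega> Z n \<le> ennreal (lam1 ^ n)) \<and>
            (expected_size \<Omega> Z \<longlonglongrightarrow> 0))
       \<and> (\<forall>(\<Omega> :: 'w measure) Z. gw_process p \<alpha>2 \<Omega> Z \<longrightarrow>
            (expected_size \<Omega> Z \<longlonglongrightarrow> \<infinity>) \<and>
            measure \<Omega> (extinction_event \<Omega> Z) = 1)"
proof -
  let ?S = "{z. popsize z \<noteq> 0}"
  have fin: "finite_offspring p" using fin_offspring by (simp add: finite_offspring_def)
  have lam1_nonneg: "0 \<le> lam1" and sub1: "\<And>j. (\<Sum>k. ennreal (pmf \<alpha>1 k) * mean_matrix p k j)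
      \<le> ennreal lam1 * ennreal (pmf \<alpha>1 j)"
    using subinvariant_ennreal[OF fin_mean \<alpha>1_pos \<alpha>1M] by auto
  have super2: "ennreal lam2 * ennreal (pmf \<alpha>2 j) \<le> (\<Sum>k. ennreal (pmf \<alpha>2 k) * mean_matrix p k j)" for j
    using \<alpha>2M[of j] lam2 by (simp add: ennreal_mult)
  have vanish: "(\<lambda>n. measure_pmf.prob (gen_law p \<mu> n) ?S) \<longlonglongrightarrow> 0" for \<mu>
    using survival_vanishes_from_type[OF fin \<alpha>1_pos sub1 lam1_nonneg lam1]
    by (rule survival_vanishes_mixture)
  have mean1: "expected_size \<Omega> Z n \<le> ennreal (lam1 ^ n)"
    if "gw_process p \<alpha>1 \<Omega> Z" for \<Omega> :: "'w measure" and Z n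
    using expected_popsize_le[OF fin sub1, where c=1] lam1_nonneg
    by (simp add: expected_size_gen_law[OF that] mean_count_0 ennreal_power)
  have mean2: "ennreal (lam2 ^ n) \<le> expected_size \<Omega> Z n"
    if "gw_process p \<alpha>2 \<Omega> Z" for \<Omega> :: "'w measure" and Z n
    using expected_popsize_ge[OF fin super2] lam2
    by (simp add: expected_size_gen_law[OF that] ennreal_power)
  show ?thesis
  proof (intro conjI allI impI)
    fix \<Omega> :: "'w measure" and Z
    show "measure \<Omega> (extinction_event \<Omega> Z) = 1" if "gw_process p (return_pmf i) \<Omega> Z" for i
      using that vanish by (rule extinction_if_survival_vanishes)
    show "measure \<Omega> (extinction_event \<Omega> Z) = 1" if "gw_process p \<alpha>2 \<Omega> Z"
      using that vanish by (rule extinction_if_survival_vanishes)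
    show "expected_size \<Omega> Z n \<le> ennreal (lam1 ^ n)" if "gw_process p \<alpha>1 \<Omega> Z" for n
      using that by (rule mean1)
    show "expected_size \<Omega> Z \<longlonglongrightarrow> 0" if "gw_process p \<alpha>1 \<Omega> Z"
      using lam1_nonneg lam1 mean1[OF that] by (rule tendsto_zero_geometric_upper)
    show "expected_size \<Omega> Z \<longlonglongrightarrow> \<infinity>" if "gw_process p \<alpha>2 \<Omega> Z"
      using lam2 mean2[OF that] by (rule tendsto_infinity_geometric_lower)
  qed
qed

end
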